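(* Let $\mathcal{C}\subseteq\mathbb{F}^n$ be an $\mathbb{F}$-linear code and $\mathcal{L}=(\mathcal{L}_1,\dots,\mathcal{L}_\ell)\in\mathcal{P}(\mathbf{K}^{\mathbf{n}})$. Then for $\mathbf{c}\in\mathcal{C}^\perp$, we have $\mathbf{c}\in\mathcal{C}(\mathcal{L})$ if and only if $\mathbf{c}\cdot\mathbf{y}=0$ for all $\mathbf{y}=(\mathbf{y}^{(1)},\dots,\mathbf{y}^{(\ell)})$ with $\mathbf{y}^{(i)}\in\mathcal{L}_i$ for all $i$ (viewed as a vector in $\mathbb{F}^n$). Furthermore, $\mathcal{C}(\mathcal{L})$ is an $\mathbb{F}$-linear subspace of $\mathcal{C}^\perp$.
   Context: Setting: $\ell,n_1,\dots,n_\ell$ positive integers, $K_1,\dots,K_\ell$ finite fields with a common finite extension $\mathbb{F}$, $m_i=[\mathbb{F}:K_i]$, $n=\sum n_i$. $\mathcal{P}(\mathbf{K}^{\mathbf{n}})=\mathcal{P}(K_1^{n_1})\times\cdots\times\mathcal{P}(K_\ell^{n_\ell})$, where $\mathcal{P}(K_i^{n_i})$ is the lattice of $K_i$-subspaces of $K_i^{n_i}$; inclusion and orthogonal complements (w.r.t. the standard bilinear form on $K_i^{n_i}$) are componentwise. For $\mathbf{c}=(\mathbf{c}^{(1)},\dots,\mathbf{c}^{(\ell)})\in\mathbb{F}^n$ with $\mathbf{c}^{(i)}\in\mathbb{F}^{n_i}$, fix an ordered basis of $\mathbb{F}/K_i$ and let $\Gamma_i(\mathbf{c}^{(i)})$ be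 the $m_i\times n_i$ matrix over $K_i$ whose $j$-th column is the coordinate vector of the $j$-th entry of $\mathbf{c}^{(i)}$; the sum-rank support of $\mathbf{c}$ is $\mathrm{supp}(\mathbf{c})=(E_1,\dots,E_\ell)\in\mathcal{P}(\mathbf{K}^{\mathbf{n}})$ with $E_i$ the $K_i$-row space of $\Gamma_i(\mathbf{c}^{(i)})$. $\mathcal{C}^\perp$ is the orthogonal complement of $\mathcal{C}$ in $\mathbb{F}^n$ w.r.t. the standard bilinear form, and $\mathcal{C}(\mathcal{L})=\{\mathbf{c}\in\mathcal{C}^\perp:\mathrm{supp}(\mathbf{c})\subseteq\mathcal{L}^\perp\}$. *)

theory Defs
  imports Main
begin

text \<open>The common extension field F is the type 'f (a finite field); each K_i is a subfield
 of F, given as a set. Indices are 0-based: blocks i < l, positions j < n i.\<close>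

definition subfield :: "'f::field set \<Rightarrow> bool" where
  "subfield K \<longleftrightarrow> 0 \<in> K \<and> 1 \<in> K \<and> (\<forall>x\<in>K. \<forall>y\<in>K. x + y \<in> K \<and> x * y \<in> K)
     \<and> (\<forall>x\<in>K. - x \<in> K) \<and> (\<forall>x\<in>K. x \<noteq> 0 \<longrightarrow> inverse x \<in> K)"

definition Kvecs :: "'f::field set \<Rightarrow> nat \<Rightarrow> (nat \<Rightarrow> 'f) set" where
  "Kvecs K k = {v. (\<forall>j<k. v j \<in> K) \<and> (\<forall>j\<ge>k. v j = 0)}"

definition Kdot :: "nat \<Rightarrow> (nat \<Rightarrow> 'f::field) \<Rightarrow> (nat \<Rightarrow> 'f) \<Rightarrow> 'f" where
  "Kdot k v w = (\<Sum>j<k. v j * w j)"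

definition Ksubspace :: "'f::field set \<Rightarrow> nat \<Rightarrow> (nat \<Rightarrow> 'f) set \<Rightarrow> bool" where
  "Ksubspace K k V \<longleftrightarrow> V \<subseteq> Kvecs K k \<and> (\<lambda>_. 0) \<in> V
     \<and> (\<forall>v\<in>V. \<forall>w\<in>V. (\<lambda>j. v j + w j) \<in> V)
     \<and> (\<forall>a\<in>K. \<forall>v\<in>V. (\<lambda>j. a * v j) \<in> V)"

definition Korth :: "'f::field set \<Rightarrow> nat \<Rightarrow> (nat \<Rightarrow> 'f) set \<Rightarrow> (nat \<Rightarrow> 'f) set" where
  "Korth K k V = {v \<in> Kvecs K k. \<forall>w\<in>V. Kdot k v w = 0}"

definition is_basis :: "'f::field set \<Rightarrow> nat \<Rightarrow> (nat \<Rightarrow> 'f) \<Rightarrow> bool" where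
  "is_basis K m b \<longleftrightarrow> (\<forall>x::'f. \<exists>!a. (\<forall>k<m. a k \<in> K) \<and> (\<forall>k\<ge>m. a k = 0)
      \<and> x = (\<Sum>k<m. a k * b k))"

definition coord :: "'f::field set \<Rightarrow> nat \<Rightarrow> (nat \<Rightarrow> 'f) \<Rightarrow> 'f \<Rightarrow> nat \<Rightarrow> 'f" where
  "coord K m b x = (THE a. (\<forall>k<m. a k \<in> K) \<and> (\<forall>k\<ge>m. a k = 0) \<and> x = (\<Sum>k<m. a k * b k))"

text \<open>Row k of the m x k' matrix Gamma(v) whose j-th column is the coordinate vector of v j.\<close>
definition Gamma_row :: "'f::field set \<Rightarrow> nat \<Rightarrow> (nat \<Rightarrow> 'f) \<Rightarrow> nat \<Rightarrow> (nat \<Rightarrow> 'f) \<Rightarrow> nat \<Rightarrow> (nat \<Rightarrow> 'f)" where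
  "Gamma_row K m b k' v k = (\<lambda>j. if j < k' then coord K m b (v j) k else 0)"

definition row_space :: "'f::field set \<Rightarrow> nat \<Rightarrow> (nat \<Rightarrow> 'f) \<Rightarrow> nat \<Rightarrow> (nat \<Rightarrow> 'f) \<Rightarrow> (nat \<Rightarrow> 'f) set" where
  "row_space K m b k' v = {(\<lambda>j. \<Sum>k<m. a k * Gamma_row K m b k' v k j) | a. \<forall>k<m. a k \<in> K}"

text \<open>Vectors of F^n = F^{n_0} x ... x F^{n_{l-1}} in block form: c i j is the j-th entry of c^(i).\<close>
definition Fvecs :: "nat \<Rightarrow> (nat \<Rightarrow> nat) \<Rightarrow> (nat \<Rightarrow> nat \<Rightarrow> 'f::field) set" where
  "Fvecs l n = {c. \<forall>i j. (l \<le> i \<or> n i \<le> j) \<longrightarrow> c i j = 0}"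

definition Fdot :: "nat \<Rightarrow> (nat \<Rightarrow> nat) \<Rightarrow> (nat \<Rightarrow> nat \<Rightarrow> 'f::field) \<Rightarrow> (nat \<Rightarrow> nat \<Rightarrow> 'f) \<Rightarrow> 'f" where
  "Fdot l n c y = (\<Sum>i<l. \<Sum>j<n i. c i j * y i j)"

definition Fsubspace :: "nat \<Rightarrow> (nat \<Rightarrow> nat) \<Rightarrow> (nat \<Rightarrow> nat \<Rightarrow> 'f::field) set \<Rightarrow> bool" where
  "Fsubspace l n V \<longleftrightarrow> V \<subseteq> Fvecs l n \<and> (\<lambda>_ _. 0) \<in> V
     \<and> (\<forall>v\<in>V. \<forall>w\<in>V. (\<lambda>i j. v i j + w i j) \<in> V)
     \<and> (\<forall>a. \<forall>v\<in>V. (\<lambda>i j. a * v i j) \<in> V)"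

definition dual_code :: "nat \<Rightarrow> (nat \<Rightarrow> nat) \<Rightarrow> (nat \<Rightarrow> nat \<Rightarrow> 'f::field) set \<Rightarrow> (nat \<Rightarrow> nat \<Rightarrow> 'f) set" where
  "dual_code l n C = {c \<in> Fvecs l n. \<forall>x\<in>C. Fdot l n c x = 0}"

definition supp :: "nat \<Rightarrow> (nat \<Rightarrow> nat) \<Rightarrow> (nat \<Rightarrow> 'f::field set) \<Rightarrow> (nat \<Rightarrow> nat) \<Rightarrow> (nat \<Rightarrow> nat \<Rightarrow> 'f)
    \<Rightarrow> (nat \<Rightarrow> nat \<Rightarrow> 'f) \<Rightarrow> nat \<Rightarrow> (nat \<Rightarrow> 'f) set" where
  "supp l n K m b c = (\<lambda>i. row_space (K i) (m i) (b i) (n i) (c i))"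

definition code_L :: "nat \<Rightarrow> (nat \<Rightarrow> nat) \<Rightarrow> (nat \<Rightarrow> 'f::field set) \<Rightarrow> (nat \<Rightarrow> nat) \<Rightarrow> (nat \<Rightarrow> nat \<Rightarrow> 'f)
    \<Rightarrow> (nat \<Rightarrow> nat \<Rightarrow> 'f) set \<Rightarrow> (nat \<Rightarrow> (nat \<Rightarrow> 'f) set) \<Rightarrow> (nat \<Rightarrow> nat \<Rightarrow> 'f) set" where
  "code_L l n K m b C L = {c \<in> dual_code l n C.
      \<forall>i<l. supp l n K m b c i \<subseteq> Korth (K i) (n i) (L i)}"

end

theory Submission
  imports Defs
begin

text \<open>Expanding every entry of \<open>v\<close> in the basis \<open>b\<close> gives
  \<open>v \<cdot> w = \<Sum>\<^sub>r (\<Gamma>\<^sub>r(v) \<cdot> w) b\<^sub>r\<close>, where \<open>\<Gamma>\<^sub>r(v)\<close> is the \<open>r\<close>-th row of \<open>\<Gamma>(v)\<close>.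
  For \<open>w \<in> K\<^sup>k\<close> the coefficients \<open>\<Gamma>\<^sub>r(v) \<cdot> w\<close> lie in \<open>K\<close>, so by linear independence of
  the basis \<open>v \<cdot> w = 0\<close> iff every row of \<open>\<Gamma>(v)\<close> is orthogonal to \<open>w\<close>, i.e. iff the whole row
  space is. Hence \<open>supp(c) \<subseteq> \<L>\<^sup>\<bottom>\<close> iff each block \<open>c\<^sub>i\<close> is orthogonal to \<open>\<L>\<^sub>i\<close>, and since
  \<open>\<L>\<close> is a product containing \<open>0\<close>, this holds iff \<open>c\<close> is orthogonal to every \<open>y \<in> \<L>\<close>.
  So \<open>\<C>(\<L>)\<close> is the annihilator of \<open>\<C> \<union> \<L>\<close>, which is a subspace.\<close>

lemma subfield_sum_closed:
  assumes "subfield K" "\<forall>j\<in>A. f j \<in> K"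
  shows "sum f A \<in> K"
proof (cases "finite A")
  case True
  then show ?thesis using assms(2)
    by (induction A rule: finite_induct) (use assms(1) in \<open>auto simp: subfield_def\<close>)
qed (use assms(1) in \<open>simp add: subfield_def\<close>)

lemma coord_in_field: "is_basis K m b \<Longrightarrow> r < m \<Longrightarrow> coord K m b x r \<in> K"
  and coord_expansion: "is_basis K m b \<Longrightarrow> x = (\<Sum>r<m. coord K m b x r * b r)"
proof -
  assume "is_basis K m b"
  then have "\<exists>!a. (\<forall>k<m. a k \<in> K) \<and> (\<forall>k\<ge>m. a k = 0) \<and> x = (\<Sum>k<m. a k * b k)"
    unfolding is_basis_def by blast
  then have "(\<forall>k<m. coord K m b x k \<in> K) \<and> (\<forall>k\<ge>m. coord K m b x k = 0)
      \<and> x = (\<Sum>k<m. coord K m b x k * b k)"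
    unfolding coord_def by (rule theI')
  then show "r < m \<Longrightarrow> coord K m b x r \<in> K" "x = (\<Sum>r<m. coord K m b x r * b r)" by blast+
qed

lemma is_basis_coeffs_eq_0:
  assumes bas: "is_basis K m b" and "subfield K"
    and t: "\<forall>k<m. t k \<in> K" and comb: "(\<Sum>k<m. t k * b k) = 0" and "r < m"
  shows "t r = 0"
proof -
  define t' where "t' k = (if k < m then t k else 0)" for k
  from bas have "\<exists>!a. (\<forall>k<m. a k \<in> K) \<and> (\<forall>k\<ge>m. a k = 0) \<and> (0::'a) = (\<Sum>k<m. a k * b k)"
    unfolding is_basis_def by blast
  then obtain a where unique: "\<And>a'. (\<forall>k<m. a' k \<in> K) \<and> (\<forall>k\<ge>m. a' k = 0)
      \<and> (0::'a) = (\<Sum>k<m. a' k * b k) \<Longrightarrow> a' = a"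
    by (elim ex1E) blast
  have "t' = a" by (rule unique) (use t comb in \<open>simp add: t'_def\<close>)
  moreover have "(\<lambda>_. 0) = a" by (rule unique) (use \<open>subfield K\<close> in \<open>simp add: subfield_def\<close>)
  ultimately have "t' = (\<lambda>_. 0)" by (rule trans[OF _ sym])
  then show ?thesis using \<open>r < m\<close> unfolding t'_def by (metis (full_types))
qed

lemma Kdot_sum_left:
  "Kdot k (\<lambda>j. \<Sum>r\<in>R. a r * u r j) w = (\<Sum>r\<in>R. a r * Kdot k (u r) w)"
proof -
  have "Kdot k (\<lambda>j. \<Sum>r\<in>R. a r * u r j) w = (\<Sum>j<k. \<Sum>r\<in>R. a r * (u r j * w j))"
    unfolding Kdot_def by (simp add: sum_distrib_right mult.assoc)
  also have "\<dots> = (\<Sum>r\<in>R. \<Sum>j<k. a r * (u r j * w j))" by (rule sum.swap)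
  finally show ?thesis unfolding Kdot_def by (simp add: sum_distrib_left)
qed

lemma Kdot_eq_sum_Gamma_rows:
  assumes "is_basis K m b"
  shows "Kdot k v w = (\<Sum>r<m. Kdot k (Gamma_row K m b k v r) w * b r)"
proof -
  have "Kdot k v w = (\<Sum>j<k. (\<Sum>r<m. coord K m b (v j) r * b r) * w j)"
    unfolding Kdot_def using coord_expansion[OF assms] by metis
  also have "\<dots> = (\<Sum>j<k. \<Sum>r<m. coord K m b (v j) r * w j * b r)"
    unfolding sum_distrib_right by (simp add: mult_ac)
  also have "\<dots> = (\<Sum>r<m. \<Sum>j<k. coord K m b (v j) r * w j * b r)"
    by (rule sum.swap)
  finally show ?thesis
    unfolding Kdot_def Gamma_row_def by (simp add: sum_distrib_right)
qed

lemma Kdot_Gamma_row_in_field: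
  assumes "subfield K" "is_basis K m b" "w \<in> Kvecs K k" "r < m"
  shows "Kdot k (Gamma_row K m b k v r) w \<in> K"
  unfolding Kdot_def Gamma_row_def
  using assms coord_in_field[OF assms(2,4)]
  by (intro subfield_sum_closed) (auto simp: subfield_def Kvecs_def)

lemma Gamma_row_in_row_space:
  assumes "subfield K" "r < m"
  shows "Gamma_row K m b k v r \<in> row_space K m b k v"
proof -
  define a :: "nat \<Rightarrow> 'a" where "a r' = of_bool (r' = r)" for r'
  have "{..<m} \<inter> {r'. r' = r} = {r}" using \<open>r < m\<close> by auto
  then have "Gamma_row K m b k v r = (\<lambda>j. \<Sum>r'<m. a r' * Gamma_row K m b k v r' j)"
    unfolding a_def by simp
  moreover have "\<forall>r'<m. a r' \<in> K" using \<open>subfield K\<close> unfolding a_def subfield_def by simp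
  ultimately show ?thesis unfolding row_space_def by blast
qed

lemma row_space_subset_Kvecs:
  assumes "subfield K" "is_basis K m b"
  shows "row_space K m b k v \<subseteq> Kvecs K k"
  unfolding row_space_def Kvecs_def Gamma_row_def
  using assms coord_in_field[OF assms(2)]
  by (auto intro!: subfield_sum_closed simp: subfield_def)

lemma row_space_subset_Korth_iff:
  assumes sf: "subfield K" and bas: "is_basis K m b" and L: "L \<subseteq> Kvecs K k"
  shows "row_space K m b k v \<subseteq> Korth K k L \<longleftrightarrow> (\<forall>w\<in>L. Kdot k v w = 0)"
proof
  assume "row_space K m b k v \<subseteq> Korth K k L"
  then have "Kdot k (Gamma_row K m b k v r) w = 0" if "w \<in> L" "r < m" for w r
    using Gamma_row_in_row_space[OF sf \<open>r < m\<close>] that unfolding Korth_def by blast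
  then show "\<forall>w\<in>L. Kdot k v w = 0"
    by (subst Kdot_eq_sum_Gamma_rows[OF bas]) simp
next
  assume orth: "\<forall>w\<in>L. Kdot k v w = 0"
  have rows: "Kdot k (Gamma_row K m b k v r) w = 0" if "w \<in> L" "r < m" for w r
  proof (rule is_basis_coeffs_eq_0[OF bas sf _ _ \<open>r < m\<close>])
    show "\<forall>r<m. Kdot k (Gamma_row K m b k v r) w \<in> K"
      using Kdot_Gamma_row_in_field[OF sf bas] L \<open>w \<in> L\<close> by blast
    show "(\<Sum>r<m. Kdot k (Gamma_row K m b k v r) w * b r) = 0"
      using orth \<open>w \<in> L\<close> Kdot_eq_sum_Gamma_rows[OF bas, of k v w] by simp
  qed
  show "row_space K m b k v \<subseteq> Korth K k L"
  proof
    fix x assume x: "x \<in> row_space K m b k v"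
    then obtain a where "x = (\<lambda>j. \<Sum>r<m. a r * Gamma_row K m b k v r j)"
      unfolding row_space_def by blast
    then have "\<forall>w\<in>L. Kdot k x w = 0" by (simp add: Kdot_sum_left rows)
    then show "x \<in> Korth K k L"
      using x row_space_subset_Kvecs[OF sf bas] unfolding Korth_def by blast
  qed
qed

lemma Fdot_orth_product_iff:
  assumes "\<forall>i<l. (\<lambda>_. 0) \<in> L i"
  shows "(\<forall>y. (\<forall>i<l. y i \<in> L i) \<longrightarrow> Fdot l n c y = 0)
     \<longleftrightarrow> (\<forall>i<l. \<forall>w\<in>L i. Kdot (n i) (c i) w = 0)"
proof
  assume orth: "\<forall>y. (\<forall>i<l. y i \<in> L i) \<longrightarrow> Fdot l n c y = 0"
  show "\<forall>i<l. \<forall>w\<in>L i. Kdot (n i) (c i) w = 0"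
  proof (intro allI impI ballI)
    fix i w assume "i < l" "w \<in> L i"
    let ?y = "\<lambda>i'. if i' = i then w else (\<lambda>_. 0)"
    have "Fdot l n c ?y = 0" using orth[rule_format, of ?y] assms \<open>w \<in> L i\<close> by simp
    moreover have "Fdot l n c ?y = (\<Sum>i'<l. if i' = i then Kdot (n i) (c i) w else 0)"
      unfolding Fdot_def Kdot_def by (rule sum.cong) auto
    ultimately show "Kdot (n i) (c i) w = 0" using \<open>i < l\<close> by simp
  qed
next
  assume "\<forall>i<l. \<forall>w\<in>L i. Kdot (n i) (c i) w = 0"
  then show "\<forall>y. (\<forall>i<l. y i \<in> L i) \<longrightarrow> Fdot l n c y = 0"
    unfolding Fdot_def Kdot_def by simp
qed

lemma Fsubspace_annihilator: "Fsubspace l n {c \<in> Fvecs l n. \<forall>y\<in>Y. Fdot l n c y = 0}"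
  unfolding Fsubspace_def Fvecs_def Fdot_def
  by (auto simp: distrib_right sum.distrib mult.assoc simp flip: sum_distrib_left)

lemma code_L_eq_annihilator:
  assumes "\<forall>i<l. subfield (K i)" "\<forall>i<l. is_basis (K i) (m i) (b i)"
    and "\<forall>i<l. Ksubspace (K i) (n i) (L i)"
  shows "code_L l n K m b C L
    = {c \<in> Fvecs l n. \<forall>y \<in> C \<union> {y. \<forall>i<l. y i \<in> L i}. Fdot l n c y = 0}"
proof -
  have block: "supp l n K m b c i \<subseteq> Korth (K i) (n i) (L i) \<longleftrightarrow> (\<forall>w\<in>L i. Kdot (n i) (c i) w = 0)"
    if "i < l" for c i
    unfolding supp_def using assms that
    by (intro row_space_subset_Korth_iff) (auto simp: Ksubspace_def)
  have "\<forall>i<l. (\<lambda>_. 0) \<in> L i" using assms(3) unfolding Ksubspace_def by blast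
  note product = Fdot_orth_product_iff[OF this]
  have "c \<in> code_L l n K m b C L
      \<longleftrightarrow> c \<in> dual_code l n C \<and> (\<forall>i<l. \<forall>w\<in>L i. Kdot (n i) (c i) w = 0)" for c
    unfolding code_L_def using block by auto
  then show ?thesis
    unfolding product[symmetric] dual_code_def by blast
qed

theorem mainTheorem3:
  fixes l :: nat and n :: "nat \<Rightarrow> nat" and K :: "nat \<Rightarrow> 'f::{field,finite} set"
    and m :: "nat \<Rightarrow> nat" and b :: "nat \<Rightarrow> nat \<Rightarrow> 'f"
    and C :: "(nat \<Rightarrow> nat \<Rightarrow> 'f) set" and L :: "nat \<Rightarrow> (nat \<Rightarrow> 'f) set"
  assumes "l > 0" and "\<forall>i<l. n i > 0"
    and "\<forall>i<l. subfield (K i)"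
    and "\<forall>i<l. is_basis (K i) (m i) (b i)"
    and "Fsubspace l n C"
    and "\<forall>i<l. Ksubspace (K i) (n i) (L i)"
  shows "(\<forall>c \<in> dual_code l n C. c \<in> code_L l n K m b C L \<longleftrightarrow>
            (\<forall>y. (\<forall>i<l. y i \<in> L i) \<longrightarrow> Fdot l n c y = 0))
         \<and> Fsubspace l n (code_L l n K m b C L)
         \<and> code_L l n K m b C L \<subseteq> dual_code l n C"
proof -
  note code_L = code_L_eq_annihilator[OF assms(3,4,6), of C]
  have "c \<in> code_L l n K m b C L \<longleftrightarrow> (\<forall>y. (\<forall>i<l. y i \<in> L i) \<longrightarrow> Fdot l n c y = 0)"
    if "c \<in> dual_code l n C" for c
    using that unfolding code_L dual_code_def by blast
  moreover have "Fsubspace l n (code_L l n K m b C L)"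
    unfolding code_L by (rule Fsubspace_annihilator)
  moreover have "code_L l n K m b C L \<subseteq> dual_code l n C"
    unfolding code_L_def by blast
  ultimately show ?thesis by blast
qed

end
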